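(* Let $\mathcal{S}$ be an addable abstract numeration system and let $Y\subseteq\mathbb{N}^{\mathbb{N}}$ be a subshift (over a finite subset of $\mathbb{N}$) that is $\mathcal{S}$-codable. Then its hereditary closure $\tilde Y=\{\mathbf{x}\in\mathbb{N}^{\mathbb{N}}:\exists\mathbf{y}\in Y\ \forall i\ x_i\le y_i\}$ is $\mathcal{S}$-codable.
   Context: ANS: $\mathcal{S}=(L,\prec)$ with $L$ an infinite language and $\prec$ a total order of type $\omega$; $\mathrm{rep}(n)$ is the $n$-th word of $L$; tuples are represented by left-padding with a new symbol $\#$; $Z\subseteq\mathbb{N}^d$ is $\mathcal{S}$-recognizable if $\mathrm{rep}(Z)$ is regular; $\mathcal{S}$ is addable if $\{(x,y,x+y)\}$ is $\mathcal{S}$-recognizable. For $\mathbf{y}\in\mathbb{N}^{\mathbb{N}}$: $\sum\mathbf{y}=\sum_iy_i$; if finite, $\nu(\mathbf{y})$ is the unique nondecreasing $(n_1,\dots,n_d)$ with $y_j=|\{k:n_k=j\}|$. Coding dimension of $Z\subseteq\mathbb{N}^{\mathbb{N}}$: least $d$ bounding $\sum\mathbf{y}$ on $Z$, if it exists. $Z$ is weakly $\mathcal{S}$-codable if for every $k$, $\{\nu(\mathbf{y}):\mathbf{y}\in Z,\sum\mathbf{y}\le k\}$ is $\mathcal{S}$-recognizable in each dimension; $\mathcal{S}$-codable if moreover the coding dimension is finite. *)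

theory Defs
  imports Main
begin

definition regular :: "'b list set \<Rightarrow> bool" where
  "regular A \<longleftrightarrow> (\<exists>(n::nat) (\<delta>::nat \<Rightarrow> 'b \<Rightarrow> nat) q0 F.
      q0 < n \<and> (\<forall>q<n. \<forall>a. \<delta> q a < n) \<and> A = {w. foldl \<delta> q0 w \<in> F})"

text \<open>An ANS (L, lt) over a finite alphabet Alph: L an infinite language over Alph,
  lt a strict total order on L of order type omega (every word has finitely many
  predecessors).\<close>
definition ans :: "'a set \<Rightarrow> 'a list set \<Rightarrow> ('a list \<Rightarrow> 'a list \<Rightarrow> bool) \<Rightarrow> bool" where
  "ans Alph L lt \<longleftrightarrow> finite Alph \<and> L \<subseteq> lists Alph \<and> infinite L
     \<and> (\<forall>w\<in>L. \<not> lt w w)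
     \<and> (\<forall>u\<in>L. \<forall>v\<in>L. \<forall>w\<in>L. lt u v \<longrightarrow> lt v w \<longrightarrow> lt u w)
     \<and> (\<forall>u\<in>L. \<forall>v\<in>L. u \<noteq> v \<longrightarrow> lt u v \<or> lt v u)
     \<and> (\<forall>w\<in>L. finite {v\<in>L. lt v w})"

text \<open>rep n is the n-th word of L (counting from 0).\<close>
definition rep :: "'a list set \<Rightarrow> ('a list \<Rightarrow> 'a list \<Rightarrow> bool) \<Rightarrow> nat \<Rightarrow> 'a list" where
  "rep L lt n = (THE w. w \<in> L \<and> card {v\<in>L. lt v w} = n)"

text \<open>Left padding with the new symbol # (rendered as None) to length m.\<close>
definition pad :: "nat \<Rightarrow> 'a list \<Rightarrow> 'a option list" where
  "pad m w = replicate (m - length w) None @ map Some w"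

text \<open>Representation of a d-tuple (a list of length d): pad all components to the
  maximal length and read them in parallel; letters are d-tuples (lists of length d)
  over Alph \<union> {#}.\<close>
definition rep_tuple :: "'a list set \<Rightarrow> ('a list \<Rightarrow> 'a list \<Rightarrow> bool) \<Rightarrow> nat list
    \<Rightarrow> 'a option list list" where
  "rep_tuple L lt xs =
     (let ws = map (rep L lt) xs;
          m = foldr (\<lambda>w k. max (length w) k) ws 0;
          ps = map (pad m) ws
      in map (\<lambda>j. map (\<lambda>p. p ! j) ps) [0..<m])"

definition recognizable :: "'a list set \<Rightarrow> ('a list \<Rightarrow> 'a list \<Rightarrow> bool) \<Rightarrow> nat list set \<Rightarrow> bool" where
  "recognizable L lt Z \<longleftrightarrow> regular (rep_tuple L lt ` Z)"

definition addable :: "'a list set \<Rightarrow> ('a list \<Rightarrow> 'a list \<Rightarrow> bool) \<Rightarrow> bool" where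
  "addable L lt \<longleftrightarrow> recognizable L lt {[x, y, x + y] | x y. True}"

text \<open>sum_le y k: the sum of y (possibly infinite) is at most k.\<close>
definition sum_le :: "(nat \<Rightarrow> nat) \<Rightarrow> nat \<Rightarrow> bool" where
  "sum_le y k \<longleftrightarrow> finite {i. y i \<noteq> 0} \<and> (\<Sum>i\<in>{i. y i \<noteq> 0}. y i) \<le> k"

definition nu :: "(nat \<Rightarrow> nat) \<Rightarrow> nat list" where
  "nu y = concat (map (\<lambda>j. replicate (y j) j) [0..<Suc (Max (insert 0 {i. y i \<noteq> 0}))])"

definition weakly_codable :: "'a list set \<Rightarrow> ('a list \<Rightarrow> 'a list \<Rightarrow> bool) \<Rightarrow> (nat \<Rightarrow> nat) set \<Rightarrow> bool" where
  "weakly_codable L lt Z \<longleftrightarrow>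
     (\<forall>k d. recognizable L lt {nu y | y. y \<in> Z \<and> sum_le y k \<and> length (nu y) = d})"

definition codable :: "'a list set \<Rightarrow> ('a list \<Rightarrow> 'a list \<Rightarrow> bool) \<Rightarrow> (nat \<Rightarrow> nat) set \<Rightarrow> bool" where
  "codable L lt Z \<longleftrightarrow> weakly_codable L lt Z \<and> (\<exists>d. \<forall>y\<in>Z. sum_le y d)"

text \<open>One-sided subshift over a finite alphabet A \<subseteq> N: closed in the product topology
  and invariant under the shift.\<close>
definition subshift :: "(nat \<Rightarrow> nat) set \<Rightarrow> bool" where
  "subshift Y \<longleftrightarrow> (\<exists>A. finite A \<and> (\<forall>x\<in>Y. \<forall>i. x i \<in> A))
     \<and> (\<forall>x\<in>Y. (\<lambda>i. x (Suc i)) \<in> Y)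
     \<and> (\<forall>x. (\<forall>n. \<exists>y\<in>Y. \<forall>i<n. y i = x i) \<longrightarrow> x \<in> Y)"

definition hered_closure :: "(nat \<Rightarrow> nat) set \<Rightarrow> (nat \<Rightarrow> nat) set" where
  "hered_closure Y = {x. \<exists>y\<in>Y. \<forall>i. x i \<le> y i}"

end

theory Submission
  imports Defs "HOL-Library.Multiset" "HOL-Library.Sublist"
begin

text \<open>If \<open>x \<le> y\<close> pointwise, the sorted tuple \<open>\<nu>(x)\<close> is a subsequence of \<open>\<nu>(y)\<close>, and every
  subsequence of \<open>\<nu>(y)\<close> arises in this way. So the \<open>d\<close>-tuples coding the hereditary closure
  are obtained from the tuples \<open>\<nu>(y)\<close>, \<open>y \<in> Y\<close>, whose lengths are bounded by the coding
  dimension \<open>D\<close>, by keeping the coordinates in some \<open>d\<close>-subset of \<open>{0,...,D-1}\<close>. There are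
  finitely many such subsets, and keeping a fixed set of coordinates preserves
  recognizability: on the parallel representation it is a letter-to-letter morphism followed
  by the removal of the leading columns that now consist of padding only, and regular
  languages are closed under both operations (both keep the set of left quotients finite).\<close>

section \<open>Regular languages and left quotients\<close>

definition lquot :: "'b list \<Rightarrow> 'b list set \<Rightarrow> 'b list set" where
  "lquot u A = {w. u @ w \<in> A}"

lemma lquot_Nil [simp]: "lquot [] A = A"
  by (simp add: lquot_def)

lemma lquot_lquot [simp]: "lquot v (lquot u A) = lquot (u @ v) A"
  by (simp add: lquot_def)

lemma foldl_closed:
  assumes "\<forall>q\<in>Q. \<forall>a. \<delta> q a \<in> Q" and "q \<in> Q"
  shows "foldl \<delta> q w \<in> Q"
  using assms(2) by (induction w arbitrary: q) (simp_all add: assms(1))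

lemma regular_if_finite_dfa:
  assumes Q: "finite Q" and q0: "q0 \<in> Q" and \<delta>: "\<forall>q\<in>Q. \<forall>a. \<delta> q a \<in> Q"
  shows "regular {w. foldl \<delta> q0 w \<in> F}"
proof -
  obtain f where f: "bij_betw f Q {0..<card Q}"
    using ex_bij_betw_finite_nat[OF Q] by blast
  define \<delta>' where "\<delta>' n a = (if n < card Q then f (\<delta> (inv_into Q f n) a) else 0)" for n a
  have fQ: "f q < card Q" if "q \<in> Q" for q
    using bij_betw_apply[OF f that] by simp
  have run: "foldl \<delta>' (f q) w = f (foldl \<delta> q w)" if "q \<in> Q" for q w
    using that
  proof (induction w arbitrary: q)
    case (Cons a w)
    have "\<delta>' (f q) a = f (\<delta> q a)"
      using Cons.prems fQ bij_betw_inv_into_left[OF f] by (simp add: \<delta>'_def)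
    then show ?case using Cons.IH[of "\<delta> q a"] Cons.prems \<delta> by simp
  qed simp
  have "{w. foldl \<delta> q0 w \<in> F} = {w. foldl \<delta>' (f q0) w \<in> f ` (F \<inter> Q)}"
    using run[OF q0] foldl_closed[OF \<delta> q0] bij_betw_imp_inj_on[OF f]
    by (auto simp: inj_on_image_mem_iff)
  moreover have "\<forall>n<card Q. \<forall>a. \<delta>' n a < card Q"
    using fQ \<delta> bij_betw_inv_into[OF f] by (auto simp: \<delta>'_def bij_betw_apply)
  ultimately show ?thesis
    unfolding regular_def using fQ[OF q0] by blast
qed

lemma finite_lquots_if_regular:
  assumes "regular A"
  shows "finite (range (\<lambda>u. lquot u A))"
proof -
  obtain n \<delta> q0 F where "q0 < (n::nat)" and \<delta>: "\<forall>q<n. \<forall>a. \<delta> q a < n"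
    and A: "A = {w. foldl \<delta> q0 w \<in> F}"
    using assms unfolding regular_def by blast
  have "lquot u A = {w. foldl \<delta> (foldl \<delta> q0 u) w \<in> F}" for u
    by (simp add: lquot_def A)
  moreover have "foldl \<delta> q0 u < n" for u
    using foldl_closed[of "{..<n}" \<delta> q0 u] \<delta> \<open>q0 < n\<close> by simp
  ultimately have "range (\<lambda>u. lquot u A) \<subseteq> (\<lambda>q. {w. foldl \<delta> q w \<in> F}) ` {..<n}"
    by blast
  then show ?thesis
    by (rule finite_subset) simp
qed

lemma regular_if_finite_lquots:
  assumes "finite (range (\<lambda>u. lquot u A))"
  shows "regular A"
proof -
  have run: "foldl (\<lambda>K a. lquot [a] K) (lquot u A) w = lquot (u @ w) A" for u w
    by (induction w arbitrary: u) simp_all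
  have "A = {w. foldl (\<lambda>K a. lquot [a] K) A w \<in> {K. [] \<in> K}}"
    using run[of "[]"] by (simp add: lquot_def)
  moreover have "regular {w. foldl (\<lambda>K a. lquot [a] K) A w \<in> {K. [] \<in> K}}"
  proof (rule regular_if_finite_dfa[OF assms])
    show "A \<in> range (\<lambda>u. lquot u A)"
      by (metis lquot_Nil rangeI)
  qed auto
  ultimately show ?thesis
    by simp
qed

lemma regular_iff_finite_lquots: "regular A \<longleftrightarrow> finite (range (\<lambda>u. lquot u A))"
  using finite_lquots_if_regular regular_if_finite_lquots by blast

lemma regular_if_lquots_in:
  assumes "finite \<F>" and "\<And>u. lquot u A \<in> \<F>"
  shows "regular A"
  using assms by (auto intro: regular_if_finite_lquots finite_subset)

lemma regular_empty: "regular {}"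
  by (rule regular_if_lquots_in[of "{{}}"]) (auto simp: lquot_def)

lemma regular_Un:
  assumes "regular A" and "regular B"
  shows "regular (A \<union> B)"
proof (rule regular_if_lquots_in)
  let ?\<F> = "(\<lambda>(K, K'). K \<union> K') ` (range (\<lambda>u. lquot u A) \<times> range (\<lambda>u. lquot u B))"
  show "finite ?\<F>"
    using assms by (simp add: regular_iff_finite_lquots)
  show "lquot u (A \<union> B) \<in> ?\<F>" for u
    by (rule image_eqI[of _ _ "(lquot u A, lquot u B)"]) (auto simp: lquot_def)
qed

lemma regular_UN:
  "finite I \<Longrightarrow> (\<And>i. i \<in> I \<Longrightarrow> regular (A i)) \<Longrightarrow> regular (\<Union>i\<in>I. A i)"
  by (induction I rule: finite_induct) (auto intro: regular_Un regular_empty)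

lemma lquot_image_map:
  "lquot v (map h ` A) = (\<Union>K\<in>{lquot u A | u. map h u = v}. map h ` K)"
proof (intro equalityI subsetI)
  fix w assume "w \<in> lquot v (map h ` A)"
  then obtain x where "x \<in> A" and "v @ w = map h x"
    by (auto simp: lquot_def)
  then obtain u w' where "x = u @ w'" "map h u = v" "map h w' = w"
    by (metis map_eq_append_conv)
  with \<open>x \<in> A\<close> show "w \<in> (\<Union>K\<in>{lquot u A | u. map h u = v}. map h ` K)"
    by (auto simp: lquot_def)
next
  fix w assume "w \<in> (\<Union>K\<in>{lquot u A | u. map h u = v}. map h ` K)"
  then obtain u w' where "map h u = v" "u @ w' \<in> A" "w = map h w'"
    by (auto simp: lquot_def)
  then show "w \<in> lquot v (map h ` A)"
    unfolding lquot_def by (metis (mono_tags, lifting) image_eqI map_append mem_Collect_eq)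
qed

lemma regular_image_map:
  assumes "regular A"
  shows "regular (map h ` A)"
proof (rule regular_if_lquots_in)
  show "finite ((\<lambda>\<K>. \<Union>K\<in>\<K>. map h ` K) ` Pow (range (\<lambda>u. lquot u A)))"
    using assms by (simp add: regular_iff_finite_lquots)
  show "lquot v (map h ` A) \<in> (\<lambda>\<K>. \<Union>K\<in>\<K>. map h ` K) ` Pow (range (\<lambda>u. lquot u A))" for v
    unfolding lquot_image_map by blast
qed

lemma lquot_image_dropWhile:
  assumes "\<not> P c"
  shows "lquot (c # v) (dropWhile P ` A) = \<Union>{lquot (p @ c # v) A | p. \<forall>z\<in>set p. P z}"
proof (intro equalityI subsetI)
  fix w assume "w \<in> lquot (c # v) (dropWhile P ` A)"
  then obtain x where x: "x \<in> A" "dropWhile P x = c # v @ w"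
    by (auto simp: lquot_def)
  then have "x = takeWhile P x @ c # v @ w"
    by (simp add: dropWhile_eq_Cons_conv)
  moreover have "\<forall>z\<in>set (takeWhile P x). P z"
    by (blast dest: set_takeWhileD)
  ultimately have "w \<in> lquot (takeWhile P x @ c # v) A"
    using x(1) by (simp add: lquot_def)
  with \<open>\<forall>z\<in>set (takeWhile P x). P z\<close>
  show "w \<in> \<Union>{lquot (p @ c # v) A | p. \<forall>z\<in>set p. P z}"
    by blast
next
  fix w assume "w \<in> \<Union>{lquot (p @ c # v) A | p. \<forall>z\<in>set p. P z}"
  then obtain p where p: "\<forall>z\<in>set p. P z" "p @ c # v @ w \<in> A"
    by (auto simp: lquot_def)
  then have "dropWhile P (p @ c # v @ w) = c # v @ w"
    using assms by simp
  with p(2) show "w \<in> lquot (c # v) (dropWhile P ` A)"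
    unfolding lquot_def by force
qed

lemma regular_image_dropWhile:
  assumes "regular A"
  shows "regular (dropWhile P ` A)"
proof (rule regular_if_lquots_in)
  let ?\<F> = "{dropWhile P ` A, {}} \<union> Union ` Pow (range (\<lambda>u. lquot u A))"
  show "finite ?\<F>"
    using assms by (simp add: regular_iff_finite_lquots)
  show "lquot v (dropWhile P ` A) \<in> ?\<F>" for v
  proof (cases v)
    case (Cons c v')
    show ?thesis
    proof (cases "P c")
      case True
      have "dropWhile P x \<noteq> c # v' @ w" for x w
        using hd_dropWhile[of P x] True by (metis list.discI list.sel(1))
      then have "lquot v (dropWhile P ` A) = {}"
        unfolding lquot_def Cons by (metis (no_types, lifting) empty_Collect_eq imageE append_Cons)
      then show ?thesis
        by simp
    next
      case False
      then show ?thesis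
        unfolding Cons lquot_image_dropWhile[of P c, OF False] by blast
    qed
  qed simp
qed

section \<open>Keeping coordinates of recognizable sets of tuples\<close>

definition max_length :: "'c list list \<Rightarrow> nat" where
  "max_length ws = foldr (\<lambda>w k. max (length w) k) ws 0"

lemma max_length_Nil [simp]: "max_length [] = 0"
  by (simp add: max_length_def)

lemma max_length_Cons [simp]: "max_length (w # ws) = max (length w) (max_length ws)"
  by (simp add: max_length_def)

lemma length_le_max_length: "w \<in> set ws \<Longrightarrow> length w \<le> max_length ws"
  by (induction ws) auto

lemma max_length_le: "\<forall>w\<in>set ws. length w \<le> k \<Longrightarrow> max_length ws \<le> k"
  by (induction ws) auto

lemma max_length_attained: "ws \<noteq> [] \<Longrightarrow> \<exists>w\<in>set ws. length w = max_length ws"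
proof (induction ws)
  case (Cons w ws)
  then show ?case
    by (cases "ws = []") (auto simp: max_def)
qed simp

definition columns :: "nat \<Rightarrow> 'c list list \<Rightarrow> 'c option list list" where
  "columns m ws = map (\<lambda>j. map (\<lambda>w. pad m w ! j) ws) [0..<m]"

definition blank :: "'c option list \<Rightarrow> bool" where
  "blank c \<longleftrightarrow> (\<forall>z\<in>set c. z = None)"

lemma rep_tuple_eq_columns:
  "rep_tuple L lt xs = columns (max_length (map (rep L lt) xs)) (map (rep L lt) xs)"
  by (simp add: rep_tuple_def Let_def columns_def max_length_def)

lemma nth_pad:
  "length w \<le> m \<Longrightarrow> j < m \<Longrightarrow>
     pad m w ! j = (if j < m - length w then None else Some (w ! (j - (m - length w))))"
  by (simp add: pad_def nth_append)

lemma dropWhile_blank_columns: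
  assumes le: "\<forall>w\<in>set ws. length w \<le> n" and "n \<le> m"
    and attained: "0 < n \<Longrightarrow> \<exists>w\<in>set ws. length w = n"
  shows "dropWhile blank (columns m ws) = columns n ws"
proof -
  have upt_split: "[0..<m] = [0..<m - n] @ map (\<lambda>i. i + (m - n)) [0..<n]"
    using upt_add_eq_append[of 0 "m - n" n] \<open>n \<le> m\<close> map_add_upt[of "m - n" n]
    by (simp add: add.commute)
  have front_blank: "blank (map (\<lambda>w. pad m w ! j) ws)" if "j < m - n" for j
    using le that \<open>n \<le> m\<close> by (auto simp: blank_def nth_pad)
  have shift: "pad m w ! (i + (m - n)) = pad n w ! i" if "w \<in> set ws" "i < n" for w i
    using le that \<open>n \<le> m\<close> by (auto simp: nth_pad)
  have "columns m ws = map (\<lambda>j. map (\<lambda>w. pad m w ! j) ws) [0..<m - n] @ columns n ws"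
    unfolding columns_def by (subst upt_split) (simp add: shift)
  then have "dropWhile blank (columns m ws) = dropWhile blank (columns n ws)"
    by (simp only:) (rule dropWhile_append2, auto intro: front_blank)
  also have "\<dots> = columns n ws"
  proof (cases "n = 0")
    case False
    then obtain w where "w \<in> set ws" "length w = n"
      using attained by auto
    moreover from this have "pad n w ! 0 \<noteq> None"
      using False by (simp add: nth_pad)
    ultimately have "\<not> blank (hd (columns n ws))"
      using False by (auto simp: columns_def blank_def hd_map upt_conv_Cons)
    then show ?thesis
      by (simp add: dropWhile_eq_self_iff)
  qed (simp add: columns_def)
  finally show ?thesis .
qed

lemma rep_tuple_nths:
  "rep_tuple L lt (nths xs S) = dropWhile blank (map (\<lambda>c. nths c S) (rep_tuple L lt xs))"
proof -
  define ws where "ws = map (rep L lt) xs"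
  define ws' where "ws' = nths ws S"
  have "map (\<lambda>c. nths c S) (rep_tuple L lt xs) = columns (max_length ws) ws'"
    by (simp add: rep_tuple_eq_columns columns_def nths_map ws_def ws'_def)
  moreover have "dropWhile blank (columns (max_length ws) ws') = columns (max_length ws') ws'"
  proof (rule dropWhile_blank_columns)
    show "max_length ws' \<le> max_length ws"
      using set_nths_subset[of ws S] by (auto simp: ws'_def intro: max_length_le length_le_max_length)
    show "\<exists>w\<in>set ws'. length w = max_length ws'" if "0 < max_length ws'"
      using that by (intro max_length_attained) auto
  qed (simp add: length_le_max_length)
  ultimately show ?thesis
    by (simp add: rep_tuple_eq_columns nths_map ws_def ws'_def)
qed

lemma recognizable_image_nths:
  assumes "recognizable L lt Z"
  shows "recognizable L lt ((\<lambda>l. nths l S) ` Z)"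
proof -
  have "rep_tuple L lt ` (\<lambda>l. nths l S) ` Z
      = dropWhile blank ` map (\<lambda>c. nths c S) ` rep_tuple L lt ` Z"
    by (simp add: image_image rep_tuple_nths)
  then show ?thesis
    using assms unfolding recognizable_def by (simp add: regular_image_dropWhile regular_image_map)
qed

lemma recognizable_empty: "recognizable L lt {}"
  by (simp add: recognizable_def regular_empty)

lemma recognizable_UN:
  "finite I \<Longrightarrow> (\<And>i. i \<in> I \<Longrightarrow> recognizable L lt (Z i)) \<Longrightarrow> recognizable L lt (\<Union>i\<in>I. Z i)"
  unfolding recognizable_def image_UN by (rule regular_UN)

lemma nths_Int_lessThan_length: "nths xs (I \<inter> {..<length xs}) = nths xs I"
  unfolding nths_def by (rule arg_cong[where f="map fst"], rule filter_cong) (auto simp: set_zip)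

lemma recognizable_subseqs_of_length:
  assumes "recognizable L lt Z" and "\<forall>l'\<in>Z. length l' = n"
  shows "recognizable L lt {l. \<exists>l'\<in>Z. subseq l l' \<and> length l = d}"
proof -
  have "{l. \<exists>l'\<in>Z. subseq l l' \<and> length l = d}
      = (\<Union>S\<in>{S. S \<subseteq> {..<n} \<and> card S = d}. (\<lambda>l. nths l S) ` Z)"
  proof (intro equalityI subsetI)
    fix l assume "l \<in> {l. \<exists>l'\<in>Z. subseq l l' \<and> length l = d}"
    then obtain l' I where l': "l' \<in> Z" "l = nths l' I" "length l = d"
      by (auto simp: subseq_conv_nths)
    define S where "S = I \<inter> {..<n}"
    have "l = nths l' S"
      using l' assms(2) nths_Int_lessThan_length[of l' I] by (simp add: S_def)
    moreover have "{i. i < length l' \<and> i \<in> S} = S"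
      using l'(1) assms(2) by (auto simp: S_def)
    then have "card S = d"
      using l'(3) \<open>l = nths l' S\<close> by (metis length_nths)
    moreover have "S \<subseteq> {..<n}"
      by (simp add: S_def)
    ultimately show "l \<in> (\<Union>S\<in>{S. S \<subseteq> {..<n} \<and> card S = d}. (\<lambda>l. nths l S) ` Z)"
      using l'(1) by blast
  next
    fix l assume "l \<in> (\<Union>S\<in>{S. S \<subseteq> {..<n} \<and> card S = d}. (\<lambda>l. nths l S) ` Z)"
    then obtain S l' where "S \<subseteq> {..<n}" "card S = d" "l' \<in> Z" "l = nths l' S"
      by blast
    moreover from this have "{i. i < length l' \<and> i \<in> S} = S"
      using assms(2) by auto
    ultimately show "l \<in> {l. \<exists>l'\<in>Z. subseq l l' \<and> length l = d}"
      by (auto simp: subseq_conv_nths length_nths)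
  qed
  moreover have "finite {S. S \<subseteq> {..<n} \<and> card S = d}"
    by (rule finite_subset[of _ "Pow {..<n}"]) auto
  ultimately show ?thesis
    using assms(1) by (simp add: recognizable_UN recognizable_image_nths)
qed

section \<open>The sorted tuple of a finitely supported sequence\<close>

text \<open>Unlike \<^const>\<open>nu\<close>, which stops after the largest nonzero index, \<open>nu_upto N\<close> stops at an
  arbitrary \<open>N\<close>; with a common \<open>N\<close> the tuples of \<open>x \<le> y\<close> can be compared blockwise.\<close>

definition nu_upto :: "nat \<Rightarrow> (nat \<Rightarrow> nat) \<Rightarrow> nat list" where
  "nu_upto N y = concat (map (\<lambda>j. replicate (y j) j) [0..<N])"

lemma nu_upto_0 [simp]: "nu_upto 0 y = []"
  by (simp add: nu_upto_def)

lemma nu_upto_Suc [simp]: "nu_upto (Suc N) y = nu_upto N y @ replicate (y N) N"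
  by (simp add: nu_upto_def)

lemma nu_upto_stable:
  assumes "N \<le> N'" and "\<forall>i\<ge>N. y i = 0"
  shows "nu_upto N' y = nu_upto N y"
  using assms by (induction N' rule: dec_induct) simp_all

lemma count_mset_nu_upto: "count (mset (nu_upto N y)) i = (if i < N then y i else 0)"
  by (induction N) auto

lemma sorted_nu_upto: "sorted (nu_upto N y)"
proof (induction N)
  case (Suc N)
  have "set (nu_upto N y) \<subseteq> {..<N}"
    by (auto simp: nu_upto_def)
  with Suc show ?case
    by (auto simp: sorted_append)
qed simp

lemma subseq_nu_upto_mono: "x \<le> y \<Longrightarrow> subseq (nu_upto N x) (nu_upto N y)"
proof (induction N)
  case (Suc N)
  have "replicate (y N) N = replicate (x N) N @ replicate (y N - x N) N"
    using Suc.prems by (simp add: le_fun_def flip: replicate_add)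
  then have "subseq (replicate (x N) N) (replicate (y N) N)"
    by (metis prefixI prefix_imp_subseq)
  with Suc show ?case
    by (simp add: list_emb_append_mono)
qed simp

lemma finite_nonzero_iff_eventually_zero:
  fixes y :: "nat \<Rightarrow> nat"
  shows "finite {i. y i \<noteq> 0} \<longleftrightarrow> (\<exists>N. \<forall>i\<ge>N. y i = 0)"
proof
  assume "finite {i. y i \<noteq> 0}"
  then obtain N where "\<forall>i\<in>{i. y i \<noteq> 0}. i < N"
    using finite_nat_set_iff_bounded by blast
  then show "\<exists>N. \<forall>i\<ge>N. y i = 0"
    by (meson leD mem_Collect_eq)
next
  assume "\<exists>N. \<forall>i\<ge>N. y i = 0"
  then obtain N where "\<forall>i\<ge>N. y i = 0"
    by blast
  then have "{i. y i \<noteq> 0} \<subseteq> {..<N}"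
    using not_less by auto
  then show "finite {i. y i \<noteq> 0}"
    by (rule finite_subset) simp
qed

lemma nu_eq_nu_upto:
  assumes "\<forall>i\<ge>N. y i = 0"
  shows "nu y = nu_upto N y"
proof -
  define M where "M = Suc (Max (insert 0 {i. y i \<noteq> 0}))"
  have "finite {i. y i \<noteq> 0}"
    using assms finite_nonzero_iff_eventually_zero by blast
  then have "i < M" if "y i \<noteq> 0" for i
    using that by (simp add: M_def le_imp_less_Suc)
  then have M: "\<forall>i\<ge>M. y i = 0"
    using leD by blast
  have "nu y = nu_upto M y"
    by (simp add: nu_def nu_upto_def M_def)
  also have "\<dots> = nu_upto (max M N) y"
    using M nu_upto_stable[of M "max M N" y] by simp
  also have "\<dots> = nu_upto N y"
    using assms nu_upto_stable[of N "max M N" y] by simp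
  finally show ?thesis .
qed

context
  fixes y :: "nat \<Rightarrow> nat"
  assumes finite_support: "finite {i. y i \<noteq> 0}"
begin

lemma count_mset_nu: "count (mset (nu y)) i = y i"
proof -
  obtain N where "\<forall>i\<ge>N. y i = 0"
    using finite_support finite_nonzero_iff_eventually_zero by blast
  then show ?thesis
    by (simp add: nu_eq_nu_upto count_mset_nu_upto)
qed

lemma sorted_nu: "sorted (nu y)"
  using finite_support finite_nonzero_iff_eventually_zero nu_eq_nu_upto sorted_nu_upto by metis

lemma set_nu: "set (nu y) = {i. y i \<noteq> 0}"
proof -
  have "i \<in> set (nu y) \<longleftrightarrow> y i \<noteq> 0" for i
    using count_mset_0_iff[of "nu y" i] count_mset_nu[of i] by argo
  then show ?thesis
    by blast
qed

lemma length_nu: "length (nu y) = (\<Sum>i\<in>{i. y i \<noteq> 0}. y i)"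
proof -
  have "length (nu y) = (\<Sum>i\<in>set_mset (mset (nu y)). count (mset (nu y)) i)"
    by (metis size_mset size_multiset_overloaded_eq)
  also have "\<dots> = (\<Sum>i\<in>{i. y i \<noteq> 0}. y i)"
    by (simp only: set_mset_mset set_nu count_mset_nu)
  finally show ?thesis .
qed

lemma sum_le_iff_length_nu: "sum_le y k \<longleftrightarrow> length (nu y) \<le> k"
  unfolding sum_le_def length_nu using finite_support by simp

end

lemma length_nu_le_if_sum_le: "sum_le y k \<Longrightarrow> length (nu y) \<le> k"
  using sum_le_iff_length_nu by (auto simp: sum_le_def)

lemma nu_count_mset:
  assumes "sorted l"
  shows "nu (count (mset l)) = l"
proof -
  have "{i. count (mset l) i \<noteq> 0} \<subseteq> set l"
    by auto
  then have fin: "finite {i. count (mset l) i \<noteq> 0}"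
    by (rule finite_subset) simp
  then have "mset (nu (count (mset l))) = mset l"
    by (intro multiset_eqI) (simp add: count_mset_nu)
  then show ?thesis
    using properties_for_sort[OF _ sorted_nu[OF fin]] sorted_sort_id[OF assms] by simp
qed

lemma mset_subseteq_if_subseq: "subseq xs ys \<Longrightarrow> mset xs \<subseteq># mset ys"
  by (induction rule: list_emb.induct) (auto intro: subset_mset.order_trans)

lemma subseq_nu_iff:
  assumes fin: "finite {i. y i \<noteq> 0}"
  shows "subseq l (nu y) \<longleftrightarrow> (\<exists>x\<le>y. nu x = l)"
proof
  assume "subseq l (nu y)"
  then have "mset l \<subseteq># mset (nu y)"
    by (rule mset_subseteq_if_subseq)
  then have "count (mset l) \<le> y"
    using mset_subset_eq_count count_mset_nu[OF fin] by (metis le_funI)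
  moreover have "sorted l"
    using \<open>subseq l (nu y)\<close> sorted_nths[OF sorted_nu[OF fin]] by (auto simp: subseq_conv_nths)
  ultimately show "\<exists>x\<le>y. nu x = l"
    using nu_count_mset by blast
next
  assume "\<exists>x\<le>y. nu x = l"
  then obtain x where "x \<le> y" "nu x = l"
    by blast
  obtain N where Ny: "\<forall>i\<ge>N. y i = 0"
    using fin finite_nonzero_iff_eventually_zero by blast
  then have Nx: "\<forall>i\<ge>N. x i = 0"
    using le_funD[OF \<open>x \<le> y\<close>] by (metis le_zero_eq)
  show "subseq l (nu y)"
    using subseq_nu_upto_mono[OF \<open>x \<le> y\<close>, of N] \<open>nu x = l\<close>
    by (simp only: nu_eq_nu_upto[OF Nx] nu_eq_nu_upto[OF Ny])
qed

lemma finite_nonzero_mono: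
  fixes x y :: "nat \<Rightarrow> nat"
  assumes "x \<le> y" and "finite {i. y i \<noteq> 0}"
  shows "finite {i. x i \<noteq> 0}"
proof -
  have "{i. x i \<noteq> 0} \<subseteq> {i. y i \<noteq> 0}"
    using le_funD[OF assms(1)] by (auto intro: less_le_trans)
  then show ?thesis
    using assms(2) by (rule finite_subset)
qed

lemma sum_le_mono:
  assumes "x \<le> y" and "sum_le y k"
  shows "sum_le x k"
proof -
  have fin_y: "finite {i. y i \<noteq> 0}"
    using assms(2) by (simp add: sum_le_def)
  then have fin_x: "finite {i. x i \<noteq> 0}"
    using assms(1) by (rule finite_nonzero_mono[rotated])
  have "subseq (nu x) (nu y)"
    using assms(1) subseq_nu_iff[OF fin_y] by blast
  then have "length (nu x) \<le> length (nu y)"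
    by (rule list_emb_length)
  then show ?thesis
    using assms(2) sum_le_iff_length_nu[OF fin_x] sum_le_iff_length_nu[OF fin_y] by simp
qed

section \<open>Hereditary closure\<close>

lemma nu_hered_closure_of_length:
  assumes bound: "\<forall>y\<in>Y. sum_le y D" and "d \<le> k"
  shows "{nu x | x. x \<in> hered_closure Y \<and> sum_le x k \<and> length (nu x) = d}
    = (\<Union>n\<le>D. {l. \<exists>l'\<in>{nu y | y. y \<in> Y \<and> sum_le y D \<and> length (nu y) = n}.
                   subseq l l' \<and> length l = d})"
proof (intro equalityI subsetI)
  fix l assume "l \<in> {nu x | x. x \<in> hered_closure Y \<and> sum_le x k \<and> length (nu x) = d}"
  then obtain x y where "y \<in> Y" "x \<le> y" "l = nu x" "length l = d"
    by (auto simp: hered_closure_def le_fun_def)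
  moreover from this have "subseq l (nu y)"
    using bound subseq_nu_iff by (auto simp: sum_le_def)
  moreover have "length (nu y) \<le> D"
    using bound \<open>y \<in> Y\<close> length_nu_le_if_sum_le by blast
  ultimately show "l \<in> (\<Union>n\<le>D. {l. \<exists>l'\<in>{nu y | y. y \<in> Y \<and> sum_le y D \<and> length (nu y) = n}.
                   subseq l l' \<and> length l = d})"
    using bound by blast
next
  fix l assume "l \<in> (\<Union>n\<le>D. {l. \<exists>l'\<in>{nu y | y. y \<in> Y \<and> sum_le y D \<and> length (nu y) = n}.
                   subseq l l' \<and> length l = d})"
  then obtain y where y: "y \<in> Y" "sum_le y D" and "subseq l (nu y)" "length l = d"
    by blast
  then obtain x where "x \<le> y" "nu x = l"
    using subseq_nu_iff by (auto simp: sum_le_def)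
  then have "x \<in> hered_closure Y"
    using y by (auto simp: hered_closure_def le_fun_def)
  moreover have "sum_le x k"
    using sum_le_iff_length_nu finite_nonzero_mono[OF \<open>x \<le> y\<close>] y \<open>nu x = l\<close> \<open>length l = d\<close> \<open>d \<le> k\<close>
    by (auto simp: sum_le_def)
  ultimately show "l \<in> {nu x | x. x \<in> hered_closure Y \<and> sum_le x k \<and> length (nu x) = d}"
    using \<open>nu x = l\<close> \<open>length l = d\<close> by blast
qed

theorem mainTheorem17:
  fixes Alph :: "'a set" and L :: "'a list set" and lt :: "'a list \<Rightarrow> 'a list \<Rightarrow> bool"
    and Y :: "(nat \<Rightarrow> nat) set"
  assumes "ans Alph L lt" and "addable L lt"
    and "subshift Y" and "codable L lt Y"
  shows "codable L lt (hered_closure Y)"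
proof -
  obtain D where D: "\<forall>y\<in>Y. sum_le y D"
    using assms(4) by (auto simp: codable_def)
  have "recognizable L lt {nu x | x. x \<in> hered_closure Y \<and> sum_le x k \<and> length (nu x) = d}"
    for k d
  proof (cases "d \<le> k")
    case True
    have "recognizable L lt {nu y | y. y \<in> Y \<and> sum_le y D \<and> length (nu y) = n}" for n
      using assms(4) by (simp add: codable_def weakly_codable_def)
    then show ?thesis
      unfolding nu_hered_closure_of_length[OF D True]
      by (intro recognizable_UN recognizable_subseqs_of_length) auto
  next
    case False
    then have empty: "{nu x | x. x \<in> hered_closure Y \<and> sum_le x k \<and> length (nu x) = d} = {}"
      by (auto dest: length_nu_le_if_sum_le)
    show ?thesis
      unfolding empty by (rule recognizable_empty)
  qed
  moreover have "\<forall>x\<in>hered_closure Y. sum_le x D"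
    using D sum_le_mono by (auto simp: hered_closure_def le_fun_def)
  ultimately show ?thesis
    by (auto simp: codable_def weakly_codable_def)
qed

end
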